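(* Let \((G,k)\) be an instance of Vertex Cover. None of Reduction Rules 1, 2 and 3 applies to \((G,k)\) if and only if \(\mathrm{surplus}(G)\geq 2\).
   Context: All graphs are finite, undirected and simple. \(LPVC(G)\) is the LP: minimize \(\sum_v x_v\) subject to \(x_u+x_v\ge1\) for each edge \(\{u,v\}\) and \(0\le x_v\le1\). For \(X\subseteq V(G)\), \(N(X)\) is the set of vertices outside \(X\) adjacent to some vertex of \(X\); for an independent set \(Z\), \(\mathrm{surplus}(Z)=|N(Z)|-|Z|\); \(\mathrm{surplus}(G)\) is the minimum of \(\mathrm{surplus}(Z)\) over all nonempty independent sets \(Z\) of \(G\). Reduction Rule 1 applies iff the all-\(\frac12\) assignment is not the unique optimum solution of \(LPVC(G)\). Reduction Rule 2 applies iff Rule 1 does not apply and there is an independent set \(Z\) with \(\mathrm{surplus}(Z)=1\) such that \(N(Z)\) is not independent. Reduction Rule 3 applies iff neither Rule 1 nor Rule 2 applies and there is an independent set \(Z\) with \(\mathrm{surplus}(Z)=1\) such that \(N(Z)\) is independent. *)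

theory Defs
  imports Main "HOL-Library.Extended_Real"
begin

definition simple_graph :: "'a set \<Rightarrow> 'a set set \<Rightarrow> bool" where
  "simple_graph V E \<longleftrightarrow> finite V \<and>
     (\<forall>e\<in>E. \<exists>u v. e = {u, v} \<and> u \<noteq> v \<and> u \<in> V \<and> v \<in> V)"

definition lpvc_feasible :: "'a set \<Rightarrow> 'a set set \<Rightarrow> ('a \<Rightarrow> real) \<Rightarrow> bool" where
  "lpvc_feasible V E x \<longleftrightarrow>
     (\<forall>v\<in>V. 0 \<le> x v \<and> x v \<le> 1) \<and> (\<forall>u v. {u, v} \<in> E \<longrightarrow> x u + x v \<ge> 1)"

definition lpvc_optimal :: "'a set \<Rightarrow> 'a set set \<Rightarrow> ('a \<Rightarrow> real) \<Rightarrow> bool" where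
  "lpvc_optimal V E x \<longleftrightarrow> lpvc_feasible V E x \<and>
     (\<forall>y. lpvc_feasible V E y \<longrightarrow> (\<Sum>v\<in>V. x v) \<le> (\<Sum>v\<in>V. y v))"

definition nbhd :: "'a set \<Rightarrow> 'a set set \<Rightarrow> 'a set \<Rightarrow> 'a set" where
  "nbhd V E X = {v \<in> V. v \<notin> X \<and> (\<exists>u\<in>X. {u, v} \<in> E)}"

definition independent :: "'a set \<Rightarrow> 'a set set \<Rightarrow> 'a set \<Rightarrow> bool" where
  "independent V E Z \<longleftrightarrow> Z \<subseteq> V \<and> (\<forall>u\<in>Z. \<forall>v\<in>Z. {u, v} \<notin> E)"

definition surplus :: "'a set \<Rightarrow> 'a set set \<Rightarrow> 'a set \<Rightarrow> int" where
  "surplus V E Z = int (card (nbhd V E Z)) - int (card Z)"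

text \<open>surplus(G): minimum over nonempty independent sets (infinity if there is none,
  i.e. for the empty graph).\<close>
definition surplus_graph :: "'a set \<Rightarrow> 'a set set \<Rightarrow> ereal" where
  "surplus_graph V E = (INF Z \<in> {Z. Z \<noteq> {} \<and> independent V E Z}. ereal (real_of_int (surplus V E Z)))"

definition rule1_applies :: "'a set \<Rightarrow> 'a set set \<Rightarrow> bool" where
  "rule1_applies V E \<longleftrightarrow>
     \<not> (lpvc_optimal V E (\<lambda>_. 1/2) \<and>
        (\<forall>y. lpvc_optimal V E y \<longrightarrow> (\<forall>v\<in>V. y v = 1/2)))"

definition rule2_applies :: "'a set \<Rightarrow> 'a set set \<Rightarrow> bool" where
  "rule2_applies V E \<longleftrightarrow> \<not> rule1_applies V E \<and>
     (\<exists>Z. independent V E Z \<and> surplus V E Z = 1 \<and> \<not> independent V E (nbhd V E Z))"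

definition rule3_applies :: "'a set \<Rightarrow> 'a set set \<Rightarrow> bool" where
  "rule3_applies V E \<longleftrightarrow> \<not> rule1_applies V E \<and> \<not> rule2_applies V E \<and>
     (\<exists>Z. independent V E Z \<and> surplus V E Z = 1 \<and> independent V E (nbhd V E Z))"

end

theory Submission
  imports Defs
begin

text \<open>Rule 1 fails exactly when every nonempty independent set has surplus at least 1.
  For the harder direction, let y be a feasible LP solution that is not all-1/2. The
  vertices below 1/2 form an independent set whose neighbours all lie above 1/2, so the
  surplus condition gives more vertices above 1/2 than below. Moving every value towards
  1/2 by the smallest distance a therefore lowers the objective by at least a, and makes
  one more vertex equal to 1/2; by induction y is strictly worse than the all-1/2
  solution. Conversely, an independent set Z with surplus at most 0 yields the optimal
  solution that is 0 on Z, 1 on N(Z) and 1/2 elsewhere. Rules 2 and 3 then cover exactly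
  the independent sets of surplus 1, so none of the rules applies iff all surpluses are
  at least 2.\<close>

lemma simple_graph_edge_vertices:
  assumes "simple_graph V E" "{u, v} \<in> E"
  shows "u \<in> V" "v \<in> V"
  using assms unfolding simple_graph_def by (auto simp: doubleton_eq_iff)

lemma surplus_empty [simp]: "surplus V E {} = 0"
  unfolding surplus_def nbhd_def by simp

lemma sum_indicator_diff_eq_card_diff:
  assumes "finite V" "A \<subseteq> V" "B \<subseteq> V"
  shows "(\<Sum>v\<in>V. (if v \<in> A then c else 0) - (if v \<in> B then c else 0))
         = (real (card A) - real (card B)) * (c :: real)"
proof -
  have "\<And>S. S \<subseteq> V \<Longrightarrow> (\<Sum>v\<in>V. if v \<in> S then c else 0) = real (card S) * c"
    using assms(1) by (simp add: sum.If_cases Int_absorb1)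
  then show ?thesis
    using assms by (simp add: sum_subtractf left_diff_distrib)
qed

lemma lpvc_feasible_low_independent:
  assumes "lpvc_feasible V E y"
  shows "independent V E {v\<in>V. y v < 1/2}"
  using assms unfolding lpvc_feasible_def independent_def by fastforce

lemma lpvc_feasible_nbhd_low_subset_high:
  assumes "lpvc_feasible V E y"
  shows "nbhd V E {v\<in>V. y v < 1/2} \<subseteq> {v\<in>V. y v > 1/2}"
  using assms unfolding lpvc_feasible_def nbhd_def by fastforce

lemma lpvc_feasible_card_low_less_high:
  assumes fin: "finite V" and feas: "lpvc_feasible V E y" and "\<exists>v\<in>V. y v \<noteq> 1/2"
    and surplus_pos: "\<forall>Z. Z \<noteq> {} \<and> independent V E Z \<longrightarrow> surplus V E Z \<ge> 1"
  shows "card {v\<in>V. y v < 1/2} < card {v\<in>V. y v > 1/2}"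
proof (cases "{v\<in>V. y v < 1/2} = {}")
  case True
  obtain v where "v \<in> V" "y v \<noteq> 1/2" using assms(3) by blast
  with True have "v \<in> {v\<in>V. y v > 1/2}" by auto
  with fin have "0 < card {v\<in>V. y v > 1/2}" by (auto simp: card_gt_0_iff)
  then show ?thesis by (subst True) simp
next
  case False
  have "surplus V E {v\<in>V. y v < 1/2} \<ge> 1"
    using surplus_pos False lpvc_feasible_low_independent[OF feas] by simp
  then have "card {v\<in>V. y v < 1/2} < card (nbhd V E {v\<in>V. y v < 1/2})"
    unfolding surplus_def by linarith
  also have "\<dots> \<le> card {v\<in>V. y v > 1/2}"
    using fin lpvc_feasible_nbhd_low_subset_high[OF feas] by (intro card_mono) auto
  finally show ?thesis .
qed

definition shift_toward_half :: "real \<Rightarrow> ('a \<Rightarrow> real) \<Rightarrow> 'a \<Rightarrow> real" where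
  "shift_toward_half a y v =
     (if y v > 1/2 then y v - a else if y v < 1/2 then y v + a else y v)"

lemma lpvc_feasible_shift_toward_half:
  assumes "simple_graph V E" "lpvc_feasible V E y" "0 \<le> a"
    and a_le: "\<And>v. v \<in> V \<Longrightarrow> y v \<noteq> 1/2 \<Longrightarrow> a \<le> \<bar>y v - 1/2\<bar>"
  shows "lpvc_feasible V E (shift_toward_half a y)"
  unfolding lpvc_feasible_def
proof (intro conjI allI impI ballI)
  fix v assume "v \<in> V"
  with assms(2,3) a_le[of v] show "0 \<le> shift_toward_half a y v" "shift_toward_half a y v \<le> 1"
    unfolding lpvc_feasible_def shift_toward_half_def by (auto split: if_splits)
next
  fix u v assume e: "{u, v} \<in> E"
  with assms(2) have "y u + y v \<ge> 1" unfolding lpvc_feasible_def by blast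
  with a_le[of u] a_le[of v] simple_graph_edge_vertices[OF assms(1) e]
  show "1 \<le> shift_toward_half a y u + shift_toward_half a y v"
    unfolding shift_toward_half_def by (auto split: if_splits)
qed

lemma sum_shift_toward_half:
  assumes "finite V"
  shows "(\<Sum>v\<in>V. y v - 1/2) = (\<Sum>v\<in>V. shift_toward_half a y v - 1/2)
           + (real (card {v\<in>V. y v > 1/2}) - real (card {v\<in>V. y v < 1/2})) * a"
proof -
  have "(\<Sum>v\<in>V. y v - 1/2) = (\<Sum>v\<in>V. (shift_toward_half a y v - 1/2)
      + ((if v \<in> {v\<in>V. y v > 1/2} then a else 0) - (if v \<in> {v\<in>V. y v < 1/2} then a else 0)))"
    by (rule sum.cong) (auto simp: shift_toward_half_def)
  also have "\<dots> = (\<Sum>v\<in>V. shift_toward_half a y v - 1/2)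
      + (\<Sum>v\<in>V. (if v \<in> {v\<in>V. y v > 1/2} then a else 0) - (if v \<in> {v\<in>V. y v < 1/2} then a else 0))"
    by (simp only: sum.distrib)
  also have "\<dots> = (\<Sum>v\<in>V. shift_toward_half a y v - 1/2)
      + (real (card {v\<in>V. y v > 1/2}) - real (card {v\<in>V. y v < 1/2})) * a"
    by (subst sum_indicator_diff_eq_card_diff[OF assms]) auto
  finally show ?thesis .
qed

lemma sum_minus_half_nonneg:
  assumes "\<exists>v\<in>V. y v \<noteq> 1/2 \<Longrightarrow> 0 < (\<Sum>v\<in>V. y v - 1/2)"
  shows "0 \<le> (\<Sum>v\<in>V. y v - (1/2 :: real))"
proof (cases "\<exists>v\<in>V. y v \<noteq> 1/2")
  case True
  with assms show ?thesis by (simp add: less_imp_le)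
next
  case False
  then show ?thesis by (intro sum_nonneg) auto
qed

lemma lpvc_feasible_sum_minus_half_pos:
  assumes sg: "simple_graph V E"
    and surplus_pos: "\<forall>Z. Z \<noteq> {} \<and> independent V E Z \<longrightarrow> surplus V E Z \<ge> 1"
  shows "lpvc_feasible V E y \<Longrightarrow> \<exists>v\<in>V. y v \<noteq> 1/2 \<Longrightarrow> 0 < (\<Sum>v\<in>V. y v - 1/2)"
proof (induction "card {v\<in>V. y v \<noteq> 1/2}" arbitrary: y rule: less_induct)
  case less
  have fin: "finite V" using sg simple_graph_def by blast
  define D where "D = {v\<in>V. y v \<noteq> 1/2}"
  define a where "a = Min ((\<lambda>v. \<bar>y v - 1/2\<bar>) ` D)"
  have finD: "finite D" and "D \<noteq> {}" using fin less.prems(2) unfolding D_def by auto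
  then have "a \<in> (\<lambda>v. \<bar>y v - 1/2\<bar>) ` D" unfolding a_def by (intro Min_in) auto
  then obtain w where w: "w \<in> D" "\<bar>y w - 1/2\<bar> = a" by auto
  have a_pos: "a > 0" using w unfolding D_def by auto
  have a_le: "\<And>v. v \<in> V \<Longrightarrow> y v \<noteq> 1/2 \<Longrightarrow> a \<le> \<bar>y v - 1/2\<bar>"
    using finD unfolding a_def D_def by auto
  let ?y' = "shift_toward_half a y"
  have feas': "lpvc_feasible V E ?y'"
    using lpvc_feasible_shift_toward_half[OF sg less.prems(1) less_imp_le[OF a_pos] a_le] .
  have "{v\<in>V. ?y' v \<noteq> 1/2} \<subset> D"
  proof
    show "{v\<in>V. ?y' v \<noteq> 1/2} \<subseteq> D"
      unfolding D_def shift_toward_half_def using a_pos by auto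
    have "?y' w = 1/2" using w unfolding shift_toward_half_def D_def by (auto split: if_splits)
    then show "{v\<in>V. ?y' v \<noteq> 1/2} \<noteq> D" using w(1) by auto
  qed
  then have "card {v\<in>V. ?y' v \<noteq> 1/2} < card {v\<in>V. y v \<noteq> 1/2}"
    using psubset_card_mono[OF finD] unfolding D_def by blast
  with less.hyps feas' have "0 \<le> (\<Sum>v\<in>V. ?y' v - 1/2)"
    by (intro sum_minus_half_nonneg) blast
  moreover have "a \<le> (real (card {v\<in>V. y v > 1/2}) - real (card {v\<in>V. y v < 1/2})) * a"
    using lpvc_feasible_card_low_less_high[OF fin less.prems surplus_pos] a_pos by simp
  ultimately show ?case
    using sum_shift_toward_half[OF fin, of y a] a_pos by linarith
qed

definition half_integral_solution :: "'a set \<Rightarrow> 'a set set \<Rightarrow> 'a set \<Rightarrow> 'a \<Rightarrow> real" where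
  "half_integral_solution V E Z v = (if v \<in> Z then 0 else if v \<in> nbhd V E Z then 1 else 1/2)"

lemma lpvc_feasible_half_integral_solution:
  assumes "simple_graph V E" "independent V E Z"
  shows "lpvc_feasible V E (half_integral_solution V E Z)"
  unfolding lpvc_feasible_def
proof (intro conjI allI impI ballI)
  fix u v assume e: "{u, v} \<in> E"
  have "{v, u} \<in> E" using e by (simp add: insert_commute)
  with e assms simple_graph_edge_vertices[OF assms(1) e]
  show "1 \<le> half_integral_solution V E Z u + half_integral_solution V E Z v"
    unfolding half_integral_solution_def independent_def nbhd_def by auto
qed (auto simp: half_integral_solution_def)

lemma sum_half_integral_solution:
  assumes "finite V" "independent V E Z"
  shows "(\<Sum>v\<in>V. half_integral_solution V E Z v - 1/2) = real_of_int (surplus V E Z) / 2"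
proof -
  have ZV: "Z \<subseteq> V" and NV: "nbhd V E Z \<subseteq> V" and "nbhd V E Z \<inter> Z = {}"
    using assms(2) unfolding independent_def nbhd_def by auto
  then have "(\<Sum>v\<in>V. half_integral_solution V E Z v - 1/2)
      = (\<Sum>v\<in>V. (if v \<in> nbhd V E Z then 1/2 else 0) - (if v \<in> Z then 1/2 else 0))"
    by (intro sum.cong) (auto simp: half_integral_solution_def)
  also have "\<dots> = (real (card (nbhd V E Z)) - real (card Z)) * (1/2)"
    using sum_indicator_diff_eq_card_diff[OF assms(1) NV ZV] .
  finally show ?thesis unfolding surplus_def by simp
qed

lemma not_rule1_applies_iff_surplus_pos:
  assumes sg: "simple_graph V E"
  shows "\<not> rule1_applies V E \<longleftrightarrow> (\<forall>Z. Z \<noteq> {} \<and> independent V E Z \<longrightarrow> surplus V E Z \<ge> 1)"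
proof
  assume "\<not> rule1_applies V E"
  then have opt: "lpvc_optimal V E (\<lambda>_. 1/2)"
    and uniq: "\<And>y. lpvc_optimal V E y \<Longrightarrow> \<forall>v\<in>V. y v = 1/2"
    unfolding rule1_applies_def by auto
  show "\<forall>Z. Z \<noteq> {} \<and> independent V E Z \<longrightarrow> surplus V E Z \<ge> 1"
  proof (intro allI impI, rule ccontr)
    fix Z assume Z: "Z \<noteq> {} \<and> independent V E Z" and "\<not> surplus V E Z \<ge> 1"
    let ?y = "half_integral_solution V E Z"
    have "finite V" using sg simple_graph_def by blast
    with Z \<open>\<not> surplus V E Z \<ge> 1\<close> have "(\<Sum>v\<in>V. ?y v - 1/2) \<le> 0"
      by (simp add: sum_half_integral_solution)
    then have "lpvc_optimal V E ?y"
      using opt lpvc_feasible_half_integral_solution[OF sg] Z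
      unfolding lpvc_optimal_def by (force simp: sum_subtractf)
    moreover obtain z where "z \<in> Z" "z \<in> V" using Z unfolding independent_def by blast
    ultimately show False using uniq unfolding half_integral_solution_def by force
  qed
next
  assume surplus_pos: "\<forall>Z. Z \<noteq> {} \<and> independent V E Z \<longrightarrow> surplus V E Z \<ge> 1"
  have excess_nonneg: "0 \<le> (\<Sum>v\<in>V. y v - 1/2)" if "lpvc_feasible V E y" for y
    using lpvc_feasible_sum_minus_half_pos[OF sg surplus_pos that] by (rule sum_minus_half_nonneg)
  have half_feasible: "lpvc_feasible V E (\<lambda>_. 1/2)" unfolding lpvc_feasible_def by auto
  then have "lpvc_optimal V E (\<lambda>_. 1/2)"
    using excess_nonneg unfolding lpvc_optimal_def by (simp add: sum_subtractf)
  moreover have "\<forall>v\<in>V. y v = 1/2" if "lpvc_optimal V E y" for y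
    using that half_feasible lpvc_feasible_sum_minus_half_pos[OF sg surplus_pos]
    unfolding lpvc_optimal_def by (fastforce simp: sum_subtractf)
  ultimately show "\<not> rule1_applies V E" unfolding rule1_applies_def by blast
qed

lemma surplus_graph_ge_iff:
  "surplus_graph V E \<ge> ereal c \<longleftrightarrow>
     (\<forall>Z. Z \<noteq> {} \<and> independent V E Z \<longrightarrow> real_of_int (surplus V E Z) \<ge> c)"
  unfolding surplus_graph_def le_INF_iff by auto

theorem lemma10:
  fixes V :: "'a set" and E :: "'a set set" and k :: nat
  assumes "simple_graph V E"
  shows "(\<not> rule1_applies V E \<and> \<not> rule2_applies V E \<and> \<not> rule3_applies V E)
         \<longleftrightarrow> surplus_graph V E \<ge> 2"
proof -
  have "(\<not> rule1_applies V E \<and> \<not> rule2_applies V E \<and> \<not> rule3_applies V E)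
        \<longleftrightarrow> \<not> rule1_applies V E \<and> (\<forall>Z. independent V E Z \<longrightarrow> surplus V E Z \<noteq> 1)"
    unfolding rule2_applies_def rule3_applies_def by blast
  also have "\<dots> \<longleftrightarrow> (\<forall>Z. Z \<noteq> {} \<and> independent V E Z \<longrightarrow> surplus V E Z \<ge> 2)"
    unfolding not_rule1_applies_iff_surplus_pos[OF assms]
    by (smt (verit) surplus_empty)
  also have "\<dots> \<longleftrightarrow> surplus_graph V E \<ge> 2"
    using surplus_graph_ge_iff[of 2 V E] by simp
  finally show ?thesis .
qed

end
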